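(* Let $p$ be an odd prime of the form $p = q^2 + 1$ for some integer $q$. Then the sequence $\left(\left\lfloor n^{(p-1)/2}/p \right\rfloor\right)_{n \ge 1}$ is eventually prime-free. In particular, each of the sequences $\left\lfloor n^2/5 \right\rfloor$, $\left\lfloor n^8/17 \right\rfloor$, $\left\lfloor n^{18}/37 \right\rfloor$, $\left\lfloor n^{50}/101 \right\rfloor$, $\left\lfloor n^{98}/197 \right\rfloor$, $\left\lfloor n^{128}/257 \right\rfloor$ ($n \ge 1$) is eventually prime-free.
   Context: A sequence $(a_n)_{n\ge 1}$ of positive integers is called eventually prime-free if there exists an index $n_0$ such that $a_n$ is composite for all $n \ge n_0$. (Here, as in the paper, this is understood as: only finitely many terms $a_n$ are prime.) *)

theory Defs
  imports "HOL-Computational_Algebra.Primes"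
begin

definition eventually_prime_free :: "(nat \<Rightarrow> nat) \<Rightarrow> bool" where
  "eventually_prime_free a \<longleftrightarrow> finite {n. n \<ge> 1 \<and> prime (a n)}"

end

theory Submission
  imports Defs "HOL-Number_Theory.Number_Theory"
begin

text \<open>Write \<open>p = q\<^sup>2 + 1\<close> with \<open>q = 2m\<close> and \<open>x = n^(m\<^sup>2)\<close>, so that \<open>n^((p-1)/2) = x\<^sup>2\<close>.
  By Fermat's little theorem, \<open>x\<^sup>2 mod p\<close> is \<open>0\<close>, \<open>1\<close> or \<open>p - 1 = q\<^sup>2\<close>; in every case it is
  a square \<open>s\<^sup>2\<close> with \<open>s \<le> q\<close>. Hence \<open>p \<lfloor>x\<^sup>2/p\<rfloor> = (x - s)(x + s)\<close>, and once \<open>n > 2p\<close>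
  both factors exceed \<open>p\<close>, so the cofactor \<open>\<lfloor>x\<^sup>2/p\<rfloor>\<close> cannot be prime.\<close>

lemma not_prime_cofactor:
  fixes p N A B :: nat
  assumes "prime p" "p * N = A * B" "p < A" "p < B"
  shows "\<not> prime N"
proof
  assume "prime N"
  have no_factor: False if "p dvd X" "p * N = X * Y" "p < X" "p < Y" for X Y
  proof -
    obtain a where a: "X = p * a"
      using \<open>p dvd X\<close> ..
    then have "N = a * Y"
      using that(2) prime_gt_0_nat[OF \<open>prime p\<close>] by (simp add: mult.assoc)
    then have "a = 1 \<or> Y = 1"
      using \<open>prime N\<close> prime_product by blast
    then show False
      using a that(3,4) by auto
  qed
  have "p dvd A * B"
    using assms(2) dvd_triv_left by metis
  then have "p dvd A \<or> p dvd B"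
    using \<open>prime p\<close> prime_dvd_mult_iff by blast
  then show False
    using no_factor[of A B] no_factor[of B A] assms(2-4) by (auto simp: mult.commute)
qed

lemma not_prime_square_div_prime:
  fixes p x s :: nat
  assumes "prime p" "x\<^sup>2 mod p = s\<^sup>2" "p + s < x"
  shows "\<not> prime (x\<^sup>2 div p)"
proof -
  have "p * (x\<^sup>2 div p) = x\<^sup>2 - s\<^sup>2"
    using minus_mod_eq_mult_div[of "x\<^sup>2" p] assms(2) by simp
  also have "\<dots> = (x - s) * (x + s)"
    unfolding diff_mult_distrib power2_eq_square by (simp add: algebra_simps)
  finally show ?thesis
    using not_prime_cofactor assms(1,3) by simp
qed

lemma power_half_pred_mod_prime:
  fixes p n :: nat
  assumes "prime p" "odd p" "\<not> p dvd n"
  shows "n ^ ((p - 1) div 2) mod p \<in> {1, p - 1}"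
proof -
  define r where "r = n ^ ((p - 1) div 2) mod p"
  have "(p - 1) div 2 + (p - 1) div 2 = p - 1"
    using \<open>odd p\<close> by (auto elim: oddE)
  then have "n ^ ((p - 1) div 2) * n ^ ((p - 1) div 2) = n ^ (p - 1)"
    by (simp flip: power_add)
  then have "[r * r = 1] (mod p)"
    using fermat_theorem[OF assms(1,3)] unfolding r_def cong_def by (metis mod_mult_eq)
  moreover have "r < p"
    unfolding r_def using prime_gt_0_nat[OF \<open>prime p\<close>] by simp
  moreover have "p > 1"
    using \<open>prime p\<close> prime_gt_1_nat by blast
  ultimately have "r \<ge> 1"
    by (cases r) (auto simp: cong_def)
  have "p dvd r * r - 1"
    using cong_to_1_nat[OF \<open>[r * r = 1] (mod p)\<close>] .
  also have "r * r - 1 = (r - 1) * (r + 1)"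
    unfolding diff_mult_distrib by (simp add: algebra_simps)
  finally have "p dvd r - 1 \<or> p dvd r + 1"
    using \<open>prime p\<close> prime_dvd_mult_iff by blast
  moreover have "r = 1" if "p dvd r - 1"
    using that \<open>r < p\<close> \<open>r \<ge> 1\<close> nat_dvd_not_less[of "r - 1" p] by linarith
  moreover have "r = p - 1" if "p dvd r + 1"
    using dvd_imp_le[OF that] \<open>r < p\<close> by linarith
  ultimately have "r = 1 \<or> r = p - 1"
    by blast
  then show ?thesis
    unfolding r_def by auto
qed

lemma eventually_prime_free_power_div_prime:
  fixes q :: nat
  assumes "prime (q\<^sup>2 + 1)" "even q"
  shows "eventually_prime_free (\<lambda>n. n ^ (q\<^sup>2 div 2) div (q\<^sup>2 + 1))"
proof -
  define p where "p = q\<^sup>2 + 1"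
  have "prime p" "odd p"
    using assms unfolding p_def by simp_all
  obtain m where m: "q = 2 * m"
    using \<open>even q\<close> ..
  have "m \<noteq> 0"
    using \<open>prime p\<close> m unfolding p_def by (intro notI) simp
  have half: "q\<^sup>2 div 2 = m\<^sup>2 * 2" "(p - 1) div 2 = q\<^sup>2 div 2"
    unfolding p_def m by (simp_all add: power_mult_distrib)
  have "q < p"
    unfolding p_def using le_square[of q] unfolding power2_eq_square by linarith
  have "\<not> prime (n ^ (q\<^sup>2 div 2) div p)" if "2 * p < n" for n
  proof -
    define x where "x = n ^ m\<^sup>2"
    have x_sq: "x\<^sup>2 = n ^ (q\<^sup>2 div 2)"
      unfolding x_def half by (simp add: power_mult)
    have "n \<le> x"
      unfolding x_def using \<open>m \<noteq> 0\<close> that by (simp add: self_le_power)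
    obtain s where "s \<le> q" "x\<^sup>2 mod p = s\<^sup>2"
    proof (cases "p dvd n")
      case True
      have "0 < q\<^sup>2 div 2"
        using half \<open>m \<noteq> 0\<close> by simp
      then have "p dvd x\<^sup>2"
        unfolding x_sq using True dvd_power dvd_trans by blast
      then show ?thesis
        using that[of 0] by simp
    next
      case False
      then have "x\<^sup>2 mod p \<in> {1\<^sup>2, q\<^sup>2}"
        using power_half_pred_mod_prime[OF \<open>prime p\<close> \<open>odd p\<close>] x_sq half
        unfolding p_def by simp
      moreover have "1 \<le> q"
        using \<open>m \<noteq> 0\<close> m by simp
      ultimately show ?thesis
        using that by blast
    qed
    moreover have "p + s < x"
      using \<open>s \<le> q\<close> \<open>q < p\<close> \<open>n \<le> x\<close> that by linarith
    ultimately have "\<not> prime (x\<^sup>2 div p)"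
      using not_prime_square_div_prime[OF \<open>prime p\<close>] by blast
    then show ?thesis
      unfolding x_sq .
  qed
  then have "{n. n \<ge> 1 \<and> prime (n ^ (q\<^sup>2 div 2) div p)} \<subseteq> {..2 * p}"
    using leI by blast
  then show ?thesis
    unfolding eventually_prime_free_def p_def using finite_subset by blast
qed

theorem theorem10:
  shows "(\<forall>p::nat. \<forall>q::int. prime p \<and> odd p \<and> int p = q^2 + 1 \<longrightarrow>
            eventually_prime_free (\<lambda>n. n ^ ((p - 1) div 2) div p))
       \<and> eventually_prime_free (\<lambda>n. n ^ 2 div 5)
       \<and> eventually_prime_free (\<lambda>n. n ^ 8 div 17)
       \<and> eventually_prime_free (\<lambda>n. n ^ 18 div 37)
       \<and> eventually_prime_free (\<lambda>n. n ^ 50 div 101)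
       \<and> eventually_prime_free (\<lambda>n. n ^ 98 div 197)
       \<and> eventually_prime_free (\<lambda>n. n ^ 128 div 257)"
proof (intro conjI allI impI)
  fix p :: nat and q :: int
  assume hyp: "prime p \<and> odd p \<and> int p = q^2 + 1"
  then have "int p = int ((nat \<bar>q\<bar>)\<^sup>2 + 1)"
    by simp
  then have "p = (nat \<bar>q\<bar>)\<^sup>2 + 1"
    by (simp only: of_nat_eq_iff)
  with hyp show "eventually_prime_free (\<lambda>n. n ^ ((p - 1) div 2) div p)"
    using eventually_prime_free_power_div_prime[of "nat \<bar>q\<bar>"] by simp
next
  \<comment> \<open>\<open>simp\<close> decides the primality of the numerals by trial division (\<open>prime_nat_numeral_eq\<close>).\<close>
  show "eventually_prime_free (\<lambda>n. n ^ 2 div 5)"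
    using eventually_prime_free_power_div_prime[of 2] by simp
  show "eventually_prime_free (\<lambda>n. n ^ 8 div 17)"
    using eventually_prime_free_power_div_prime[of 4] by simp
  show "eventually_prime_free (\<lambda>n. n ^ 18 div 37)"
    using eventually_prime_free_power_div_prime[of 6] by simp
  show "eventually_prime_free (\<lambda>n. n ^ 50 div 101)"
    using eventually_prime_free_power_div_prime[of 10] by simp
  show "eventually_prime_free (\<lambda>n. n ^ 98 div 197)"
    using eventually_prime_free_power_div_prime[of 14] by simp
  show "eventually_prime_free (\<lambda>n. n ^ 128 div 257)"
    using eventually_prime_free_power_div_prime[of 16] by simp
qed

end
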